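(* Let $R>0$, let $\Theta$ be a smooth function on $[0,R]$ that is positive on $[0,R)$, let $\sigma\in\mathbb{R}\setminus\{0\}$, and let $u$ be a positive first eigenfunction of $$u''+\frac{\Theta'}{\Theta}u'+\lambda u=0 \text{ on }[0,R],\qquad u'(0)=\sigma u(0),\qquad u'(R)=0,$$ with first eigenvalue $\lambda_1(R,\Theta,\sigma)$. Then: (a) if $\sigma>0$, then $u'>0$ on $[0,R)$; (b) if $\sigma<0$, then $u'<0$ on $[0,R)$; (c) if $\sigma>0$ and $0<\bar R<R$, then $\lambda_1(R,\Theta,\sigma)<\lambda_1(\bar R,\Theta,\sigma)$, where $\lambda_1(\bar R,\Theta,\sigma)$ is the first eigenvalue of the same problem on $[0,\bar R]$ with conditions $u'(0)=\sigma u(0)$, $u'(\bar R)=0$. Moreover, set $\sigma(r)=u'(r)/u(r)$ and assume in addition that $(\log\Theta)''<0$ on $[0,R)$. Then: (d) if $\sigma>0$, then $0\leq\sigma(r)\leq\sigma$ for all $r\in[0,R]$; (e) if $\sigma<0$, then $\sigma\leq\sigma(r)\leq0$ for all $r\in[0,R]$.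
   Context: The eigenvalue problem is the spectral problem for $Lu=-u''-\frac{\Theta'}{\Theta}u'$ on $L^2([0,R],\Theta(r)\,dr)$ with the given boundary conditions; its first eigenvalue is $\lambda_1(R,\Theta,\sigma)=\inf_{u\in H^1[0,R]}\frac{\int_0^Ru'^2\Theta\,dr+\sigma u(0)^2}{\int_0^Ru^2\Theta\,dr}$. *)

theory Defs
  imports "HOL-Analysis.Analysis"
begin

definition admissible_pairs :: "real \<Rightarrow> (real \<Rightarrow> real) \<Rightarrow> ((real \<Rightarrow> real) \<times> (real \<Rightarrow> real)) set" where
  "admissible_pairs R \<Theta> =
     {(u, v). (\<forall>x\<in>{0..R}. (u has_real_derivative v x) (at x within {0..R}))
              \<and> continuous_on {0..R} v
              \<and> integral {0..R} (\<lambda>r. (u r)\<^sup>2 * \<Theta> r) \<noteq> 0}"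

definition first_eigenvalue :: "real \<Rightarrow> (real \<Rightarrow> real) \<Rightarrow> real \<Rightarrow> real" where
  "first_eigenvalue R \<Theta> \<sigma> =
     (INF p \<in> admissible_pairs R \<Theta>.
        (integral {0..R} (\<lambda>r. (snd p r)\<^sup>2 * \<Theta> r) + \<sigma> * (fst p 0)\<^sup>2)
        / integral {0..R} (\<lambda>r. (fst p r)\<^sup>2 * \<Theta> r))"

end

theory Submission
  imports Defs
begin

text \<open>Multiplying the equation by \<open>\<Theta>\<close> puts it in divergence form \<open>(\<Theta> u')' = - \<lambda> \<Theta> u\<close>;
  integrating from \<open>r\<close> to \<open>R\<close> gives \<open>\<Theta>(r) u'(r) = \<lambda> \<integral>\<^sub>r\<^sup>R \<Theta> u\<close>, so \<open>u'\<close> has the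
  sign of \<open>\<lambda>\<close> on \<open>[0,R)\<close>, and \<open>r = 0\<close> shows that \<open>\<lambda>\<close> has the sign of \<open>\<sigma>\<close>.

  For the strict monotonicity of \<open>\<lambda>\<^sub>1\<close>, Picone's identity with the positive solution \<open>u\<close>,
  i.e. differentiating \<open>\<Theta> u' f\<^sup>2 / u\<close>, bounds the Rayleigh quotient of every test function
  \<open>f\<close> on \<open>[0,R\<^sub>b]\<close> below by \<open>\<lambda>\<close>, using \<open>u'(R\<^sub>b) > 0\<close>. Perturbing that function by
  \<open>- \<epsilon> r f\<^sup>2 / u\<^sup>2\<close> turns this into a uniform bound \<open>\<lambda> + \<delta>\<close>, so the infimum jumps.

  Finally \<open>s = u'/u\<close> solves the Riccati equation \<open>s' = - (log \<Theta>)' s - \<lambda> - s\<^sup>2\<close>. At an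
  interior critical point \<open>s'' = - (log \<Theta>)'' s\<close>, so for log-concave \<open>\<Theta>\<close> an interior
  maximum of \<open>s\<close> is \<open>\<le> 0\<close> and an interior minimum is \<open>\<ge> 0\<close>; hence \<open>s\<close> stays between
  its boundary values \<open>s(0) = \<sigma>\<close> and \<open>s(R) = 0\<close>.\<close>

definition rayleigh_quotient ::
    "real \<Rightarrow> (real \<Rightarrow> real) \<Rightarrow> real \<Rightarrow> (real \<Rightarrow> real) \<times> (real \<Rightarrow> real) \<Rightarrow> real" where
  "rayleigh_quotient R \<Theta> \<sigma> p =
     (integral {0..R} (\<lambda>r. (snd p r)\<^sup>2 * \<Theta> r) + \<sigma> * (fst p 0)\<^sup>2)
       / integral {0..R} (\<lambda>r. (fst p r)\<^sup>2 * \<Theta> r)"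

lemma first_eigenvalue_eq_INF_rayleigh_quotient:
  "first_eigenvalue R \<Theta> \<sigma> = (INF p \<in> admissible_pairs R \<Theta>. rayleigh_quotient R \<Theta> \<sigma> p)"
  by (simp add: first_eigenvalue_def rayleigh_quotient_def)

lemma smooth_has_real_derivative:
  assumes "open S" "(deriv ^^ n) f differentiable_on S" "x \<in> S"
  shows "((deriv ^^ n) f has_real_derivative (deriv ^^ Suc n) f x) (at x)"
proof -
  have "(deriv ^^ n) f differentiable (at x)"
    using assms differentiable_on_eq_differentiable_at by blast
  then show ?thesis
    by (simp add: DERIV_deriv_iff_real_differentiable)
qed

lemma log_derivative_has_derivative_deriv_deriv_ln:
  fixes f f' :: "real \<Rightarrow> real"
  assumes T: "open T" "x \<in> T" and f_pos: "\<And>y. y \<in> T \<Longrightarrow> 0 < f y"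
    and f_deriv: "\<And>y. y \<in> T \<Longrightarrow> (f has_real_derivative f' y) (at y)"
    and f'_deriv: "(f' has_real_derivative f'') (at x)"
  shows "((\<lambda>y. f' y / f y) has_real_derivative deriv (deriv (\<lambda>s. ln (f s))) x) (at x)"
proof -
  have quotient:
    "((\<lambda>y. f' y / f y) has_real_derivative (f'' * f x - f' x * f' x) / (f x * f x)) (at x)"
    using f_pos[OF T(2)] by (auto intro!: derivative_eq_intros f_deriv T f'_deriv)
  have "\<forall>\<^sub>F y in nhds x. deriv (\<lambda>s. ln (f s)) y = f' y / f y"
    using eventually_nhds_in_open[OF T]
  proof eventually_elim
    case (elim y)
    then show ?case
      using f_pos[OF elim]
      by (intro DERIV_imp_deriv) (auto intro!: derivative_eq_intros f_deriv simp: field_simps)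
  qed
  then have "deriv (deriv (\<lambda>s. ln (f s))) x = deriv (\<lambda>y. f' y / f y) x"
    by (rule deriv_cong_ev) simp
  also have "\<dots> = (f'' * f x - f' x * f' x) / (f x * f x)"
    using quotient by (rule DERIV_imp_deriv)
  finally show ?thesis using quotient by simp
qed

lemma interior_max_second_derivative_test:
  fixes f g :: "real \<Rightarrow> real"
  assumes x: "a < x" "x < b"
    and f_deriv: "\<And>y. y \<in> {a<..<b} \<Longrightarrow> (f has_real_derivative g y) (at y)"
    and g_deriv: "(g has_real_derivative l) (at x)"
    and max: "\<And>y. y \<in> {a<..<b} \<Longrightarrow> f y \<le> f x"
  shows "g x = 0 \<and> l \<le> 0"
proof -
  have g_x: "g x = 0"
  proof (rule DERIV_local_max[OF f_deriv])
    show "0 < min (x - a) (b - x)" using x by simp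
    show "\<forall>y. \<bar>x - y\<bar> < min (x - a) (b - x) \<longrightarrow> f y \<le> f x"
      by (intro allI impI max) (auto simp: abs_less_iff)
  qed (use x in auto)
  have "l \<le> 0"
  proof (rule ccontr)
    assume "\<not> l \<le> 0"
    then obtain d where d: "0 < d" "\<And>h. 0 < h \<Longrightarrow> h < d \<Longrightarrow> g x < g (x + h)"
      using DERIV_pos_inc_right[OF g_deriv] by force
    define h where "h = min d (b - x) / 2"
    have h: "0 < h" "h < d" "x + h < b" using d x by (auto simp: h_def min_def field_simps)
    obtain z where z: "x < z" "z < x + h" "f (x + h) - f x = h * g z"
      using MVT2[of x "x + h" f g] h x f_deriv by force
    have "0 < h * g z" using d(2)[of "z - x"] z h g_x by simp
    moreover have "f (x + h) \<le> f x" using max h x by simp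
    ultimately show False using z(3) by simp
  qed
  with g_x show ?thesis by simp
qed

lemma integral_interval_pos:
  fixes f :: "real \<Rightarrow> real"
  assumes "a < b" "continuous_on {a..b} f" "\<And>x. x \<in> {a<..<b} \<Longrightarrow> 0 \<le> f x" "0 < f a"
  shows "0 < integral {a..b} f"
proof -
  have "integral {a..b} f = integral {a<..<b} f"
    by (rule integral_open_interval_real)
  also have "\<dots> \<ge> 0"
    using assms integrable_continuous_interval
    by (intro integral_nonneg) (auto simp: integrable_on_open_interval_real)
  finally have "0 \<le> integral {a..b} f" .
  moreover have "integral {a..b} f \<noteq> 0"
  proof
    assume "integral {a..b} f = 0"
    then have "(f has_integral 0) {a..b}"
      using integrable_continuous_interval[OF assms(2)] by (metis has_integral_integral)
    then have "f a = 0"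
      using has_integral_0_cbox_imp_0[of a b f a] assms by auto
    with assms(4) show False by simp
  qed
  ultimately show ?thesis by simp
qed

lemma boundary_trace_bound:
  fixes a c A :: real and \<Theta> f v :: "real \<Rightarrow> real"
  assumes a: "0 < a" and c: "0 \<le> c" and A: "0 < A"
    and \<Theta>_ge: "\<And>x. x \<in> {0..a} \<Longrightarrow> A \<le> \<Theta> x"
    and \<Theta>_cont: "continuous_on {0..a} \<Theta>"
    and f_deriv: "\<And>x. x \<in> {0..a} \<Longrightarrow> (f has_real_derivative v x) (at x within {0..a})"
    and v_cont: "continuous_on {0..a} v"
  shows "c * (f 0)\<^sup>2 \<le> integral {0..a} (\<lambda>x. (v x)\<^sup>2 * \<Theta> x)
           + (c / a + c\<^sup>2 / A) / A * integral {0..a} (\<lambda>x. (f x)\<^sup>2 * \<Theta> x)"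
proof -
  define t where "t = c / a"
  define K where "K = (c / a + c\<^sup>2 / A) / A"
  define G' where "G' x = - t * (f x)\<^sup>2 + 2 * t * (a - x) * f x * v x" for x
  have f_cont: "continuous_on {0..a} f" using f_deriv by (rule DERIV_continuous_on)
  have G_deriv: "((\<lambda>x. t * (a - x) * (f x)\<^sup>2) has_real_derivative G' x) (at x within {0..a})"
    if "x \<in> {0..a}" for x
    using f_deriv[OF that] unfolding G'_def
    by (auto intro!: derivative_eq_intros simp: algebra_simps power2_eq_square)
  have "(G' has_integral (t * (a - a) * (f a)\<^sup>2 - t * (a - 0) * (f 0)\<^sup>2)) {0..a}"
    using fundamental_theorem_of_calculus[of 0 a "\<lambda>x. t * (a - x) * (f x)\<^sup>2" G'] G_deriv a
    by (auto simp: has_real_derivative_iff_has_vector_derivative)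
  then have G'_integral: "(G' has_integral - c * (f 0)\<^sup>2) {0..a}"
    using a by (simp add: t_def)
  have G'_lower: "- ((v x)\<^sup>2 * \<Theta> x) - K * ((f x)\<^sup>2 * \<Theta> x) \<le> G' x" if x: "x \<in> {0..a}" for x
  proof -
    define h where "h = t * (a - x)"
    have \<Theta>_x: "0 < \<Theta> x" using A \<Theta>_ge[OF x] by linarith
    have h: "0 \<le> h" "h \<le> c" using x a c mult_left_mono[of x a c]
      by (auto simp: h_def t_def field_simps)
    \<comment> \<open>AM-GM: \<open>2 h f v \<ge> - \<Theta> v\<^sup>2 - h\<^sup>2 f\<^sup>2 / \<Theta>\<close>\<close>
    have "0 \<le> \<Theta> x * (v x + h * f x / \<Theta> x)\<^sup>2" using \<Theta>_x by simp
    also have "\<dots> = \<Theta> x * (v x)\<^sup>2 + 2 * h * f x * v x + h\<^sup>2 / \<Theta> x * (f x)\<^sup>2"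
      using \<Theta>_x by (simp add: field_simps power2_eq_square)
    finally have am_gm: "- (\<Theta> x * (v x)\<^sup>2) - h\<^sup>2 / \<Theta> x * (f x)\<^sup>2 \<le> 2 * h * f x * v x"
      by linarith
    have "t + h\<^sup>2 / \<Theta> x \<le> c / a + c\<^sup>2 / A"
      using h A \<Theta>_ge[OF x] by (auto simp: t_def intro!: frac_le power_mono)
    also have "\<dots> = K * A" using A by (simp add: K_def)
    also have "\<dots> \<le> K * \<Theta> x"
      using A a c \<Theta>_ge[OF x] by (intro mult_left_mono) (simp_all add: K_def)
    finally have "(t + h\<^sup>2 / \<Theta> x) * (f x)\<^sup>2 \<le> K * \<Theta> x * (f x)\<^sup>2"
      by (rule mult_right_mono) simp
    moreover have "G' x = - t * (f x)\<^sup>2 + 2 * h * f x * v x"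
      by (simp add: G'_def h_def)
    ultimately show ?thesis using am_gm by (simp add: algebra_simps)
  qed
  have integrable: "g integrable_on {0..a}" if "continuous_on {0..a} g" for g :: "real \<Rightarrow> real"
    using that by (rule integrable_continuous_interval)
  have "- integral {0..a} (\<lambda>x. (v x)\<^sup>2 * \<Theta> x) - K * integral {0..a} (\<lambda>x. (f x)\<^sup>2 * \<Theta> x)
          \<le> - c * (f 0)\<^sup>2"
    by (rule has_integral_le[OF _ G'_integral G'_lower])
      (intro has_integral_diff has_integral_neg has_integral_mult_right integrable_integral
        integrable continuous_intros \<Theta>_cont v_cont f_cont)
  then show ?thesis unfolding K_def by simp
qed

lemma admissible_pairsD:
  assumes "(f, v) \<in> admissible_pairs R \<Theta>"
  shows "\<And>x. x \<in> {0..R} \<Longrightarrow> (f has_real_derivative v x) (at x within {0..R})"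
    and "continuous_on {0..R} f" "continuous_on {0..R} v"
  using assms by (auto simp: admissible_pairs_def intro: DERIV_continuous_on)

lemma admissible_pairs_integral_pos:
  assumes "(f, v) \<in> admissible_pairs R \<Theta>"
    and \<Theta>_cont: "continuous_on {0..R} \<Theta>" and \<Theta>_nonneg: "\<And>x. x \<in> {0..R} \<Longrightarrow> 0 \<le> \<Theta> x"
  shows "0 < integral {0..R} (\<lambda>x. (f x)\<^sup>2 * \<Theta> x)"
proof -
  have "0 \<le> integral {0..R} (\<lambda>x. (f x)\<^sup>2 * \<Theta> x)"
    using admissible_pairsD(2)[OF assms(1)] \<Theta>_nonneg
    by (intro integral_nonneg integrable_continuous_interval continuous_intros \<Theta>_cont) auto
  with assms(1) show ?thesis by (simp add: admissible_pairs_def)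
qed

lemma rayleigh_quotient_bdd_below:
  fixes R \<sigma> :: real and \<Theta> :: "real \<Rightarrow> real"
  assumes R: "0 < R" and \<Theta>_cont: "continuous_on {0..R} \<Theta>"
    and \<Theta>_pos: "\<forall>r\<in>{0..<R}. 0 < \<Theta> r" and \<Theta>_nonneg: "\<forall>r\<in>{0..R}. 0 \<le> \<Theta> r"
  shows "bdd_below (rayleigh_quotient R \<Theta> \<sigma> ` admissible_pairs R \<Theta>)"
proof -
  define a where "a = R / 2"
  have a: "0 < a" "a < R" and sub: "{0..a} \<subseteq> {0..R}" using R by (auto simp: a_def)
  obtain x0 where x0: "x0 \<in> {0..a}" "\<And>y. y \<in> {0..a} \<Longrightarrow> \<Theta> x0 \<le> \<Theta> y"
    using continuous_attains_inf[of "{0..a}" \<Theta>] continuous_on_subset[OF \<Theta>_cont sub] a by auto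
  define A where "A = \<Theta> x0"
  have A: "0 < A" using \<Theta>_pos x0 a by (auto simp: A_def)
  define K where "K = (\<bar>\<sigma>\<bar> / a + \<bar>\<sigma>\<bar>\<^sup>2 / A) / A"
  have K: "0 \<le> K" using A a by (simp add: K_def)
  have "- K \<le> rayleigh_quotient R \<Theta> \<sigma> (f, v)" if "(f, v) \<in> admissible_pairs R \<Theta>" for f v
  proof -
    note f_deriv = admissible_pairsD(1)[OF that] and f_cont = admissible_pairsD(2)[OF that]
      and v_cont = admissible_pairsD(3)[OF that]
    have mono: "integral {0..a} g \<le> integral {0..R} g"
      if "continuous_on {0..R} g" "\<forall>x\<in>{0..R}. 0 \<le> g x" for g :: "real \<Rightarrow> real"
      using that sub
      by (intro integral_subset_le integrable_continuous_interval)
        (auto intro: continuous_on_subset)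
    define N where "N = integral {0..R} (\<lambda>r. (v r)\<^sup>2 * \<Theta> r)"
    define D where "D = integral {0..R} (\<lambda>r. (f r)\<^sup>2 * \<Theta> r)"
    have D: "0 < D"
      unfolding D_def using that \<Theta>_cont \<Theta>_nonneg by (intro admissible_pairs_integral_pos) auto
    have "\<bar>\<sigma>\<bar> * (f 0)\<^sup>2 \<le> integral {0..a} (\<lambda>x. (v x)\<^sup>2 * \<Theta> x)
            + K * integral {0..a} (\<lambda>x. (f x)\<^sup>2 * \<Theta> x)"
      unfolding K_def
    proof (rule boundary_trace_bound[OF a(1) _ A])
      show "A \<le> \<Theta> x" if "x \<in> {0..a}" for x using x0(2)[OF that] by (simp add: A_def)
      show "(f has_real_derivative v x) (at x within {0..a})" if "x \<in> {0..a}" for x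
        using f_deriv that sub by (blast intro: DERIV_subset)
    qed (use continuous_on_subset[OF \<Theta>_cont sub] continuous_on_subset[OF v_cont sub] in auto)
    also have "\<dots> \<le> N + K * D"
      unfolding N_def D_def using \<Theta>_nonneg K
      by (intro add_mono mult_left_mono mono continuous_intros v_cont f_cont \<Theta>_cont) auto
    finally have "- K * D \<le> N + \<sigma> * (f 0)\<^sup>2"
      using abs_ge_minus_self[of \<sigma>] mult_right_mono[of "- \<bar>\<sigma>\<bar>" \<sigma> "(f 0)\<^sup>2"] by simp
    then show ?thesis using D by (simp add: rayleigh_quotient_def N_def D_def field_simps)
  qed
  then show ?thesis unfolding bdd_below_def by (auto intro!: exI[of _ "- K"])
qed

lemma picone_has_derivative:
  fixes lam \<epsilon> x :: real and S :: "real set" and \<Theta> \<Theta>' u u' u'' f v :: "real \<Rightarrow> real"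
  assumes "(u has_real_derivative u' x) (at x within S)"
    and "(u' has_real_derivative u'' x) (at x within S)"
    and "(\<Theta> has_real_derivative \<Theta>' x) (at x within S)"
    and "(f has_real_derivative v x) (at x within S)"
    and u_x: "0 < u x"
    and ode: "u'' x * \<Theta> x + u' x * \<Theta>' x = - lam * (\<Theta> x * u x)"
  shows "((\<lambda>y. u' y * \<Theta> y * (f y)\<^sup>2 / u y - \<epsilon> * y * (f y)\<^sup>2 / (u y)\<^sup>2) has_real_derivative
      (v x)\<^sup>2 * \<Theta> x - lam * ((f x)\<^sup>2 * \<Theta> x)
      - (\<Theta> x * (v x - u' x / u x * f x)\<^sup>2
         + 2 * \<epsilon> * x * f x * (v x - u' x / u x * f x) / (u x)\<^sup>2 + \<epsilon> * (f x)\<^sup>2 / (u x)\<^sup>2))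
    (at x within S)"
  using u_x ode
  by (auto intro!: derivative_eq_intros assms(1-4) simp: field_simps power2_eq_square power3_eq_cube)
    algebra

lemma picone_remainder_lower_bound:
  fixes T U q f x b \<epsilon> A B :: real
  assumes T: "0 < T" and U: "0 < U" and \<epsilon>: "0 < \<epsilon>" and b: "0 < b" and x: "0 \<le> x" "x \<le> b"
    and A: "0 < A" "A \<le> U\<^sup>2 * T" and B: "U\<^sup>2 * T \<le> B" and \<epsilon>_le: "\<epsilon> \<le> A / (2 * b\<^sup>2)"
  shows "\<epsilon> / (2 * B) * T * f\<^sup>2 \<le> T * q\<^sup>2 + 2 * \<epsilon> * x * f * q / U\<^sup>2 + \<epsilon> * f\<^sup>2 / U\<^sup>2"
proof -
  define k where "k = \<epsilon> * x * f / U\<^sup>2"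
  define W where "W = U\<^sup>2 * T"
  have W: "0 < W" using T U by (simp add: W_def)
  have "0 \<le> T * (q + k / T)\<^sup>2" using T by simp
  also have "\<dots> = T * q\<^sup>2 + 2 * k * q + k\<^sup>2 / T" using T by (simp add: field_simps power2_eq_square)
  finally have square: "- (k\<^sup>2 / T) \<le> T * q\<^sup>2 + 2 * k * q" by linarith
  have "\<epsilon>\<^sup>2 * x\<^sup>2 / W \<le> \<epsilon>\<^sup>2 * b\<^sup>2 / A"
    using x A W by (intro frac_le mult_left_mono power_mono) (auto simp: W_def)
  also have "\<dots> \<le> \<epsilon> / 2"
    using \<epsilon>_le \<epsilon> A b by (simp add: field_simps power2_eq_square)
  moreover have "\<epsilon> / (2 * B) * W \<le> \<epsilon> / 2"
    using B \<epsilon> W by (simp add: W_def field_simps)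
  ultimately have "\<epsilon>\<^sup>2 * x\<^sup>2 / W + \<epsilon> / (2 * B) * W \<le> \<epsilon>"
    by linarith
  then have "f\<^sup>2 / U\<^sup>2 * (\<epsilon>\<^sup>2 * x\<^sup>2 / W + \<epsilon> / (2 * B) * W) \<le> f\<^sup>2 / U\<^sup>2 * \<epsilon>"
    by (intro mult_left_mono) auto
  moreover have "k\<^sup>2 / T = f\<^sup>2 / U\<^sup>2 * (\<epsilon>\<^sup>2 * x\<^sup>2 / W)"
    and "\<epsilon> / (2 * B) * T * f\<^sup>2 = f\<^sup>2 / U\<^sup>2 * (\<epsilon> / (2 * B) * W)"
    using T U by (simp_all add: k_def W_def field_simps power2_eq_square)
  ultimately show ?thesis
    using square by (simp add: k_def algebra_simps)
qed

locale robin_neumann_eigenfunction =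
  fixes R lam \<sigma> :: real and \<Theta> \<Theta>' u u' u'' :: "real \<Rightarrow> real"
  assumes R_pos: "0 < R"
    and \<Theta>_deriv: "\<And>x. x \<in> {0..R} \<Longrightarrow> (\<Theta> has_real_derivative \<Theta>' x) (at x within {0..R})"
    and \<Theta>_pos: "\<And>x. x \<in> {0..<R} \<Longrightarrow> 0 < \<Theta> x"
    and u_deriv: "\<And>x. x \<in> {0..R} \<Longrightarrow> (u has_real_derivative u' x) (at x within {0..R})"
    and u'_deriv: "\<And>x. x \<in> {0..R} \<Longrightarrow> (u' has_real_derivative u'' x) (at x within {0..R})"
    and u_pos: "\<And>x. x \<in> {0..R} \<Longrightarrow> 0 < u x"
    and ode: "\<And>x. x \<in> {0..<R} \<Longrightarrow> u'' x * \<Theta> x + u' x * \<Theta>' x = - lam * (\<Theta> x * u x)"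
    and robin: "u' 0 = \<sigma> * u 0"
    and neumann: "u' R = 0"
begin

lemma \<Theta>_cont: "continuous_on {0..R} \<Theta>"
  using \<Theta>_deriv by (rule DERIV_continuous_on)

lemma u_cont: "continuous_on {0..R} u"
  using u_deriv by (rule DERIV_continuous_on)

lemma u'_cont: "continuous_on {0..R} u'"
  using u'_deriv by (rule DERIV_continuous_on)

lemma \<Theta>_nonneg:
  assumes "x \<in> {0..R}"
  shows "0 \<le> \<Theta> x"
  using continuous_ge_on_closure[of "{0..<R}" \<Theta> x 0] \<Theta>_cont \<Theta>_pos assms R_pos
  by (simp add: less_imp_le)

lemma derivatives_at_interior:
  assumes "x \<in> {0<..<R}"
  shows "(\<Theta> has_real_derivative \<Theta>' x) (at x)" "(u has_real_derivative u' x) (at x)"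
    "(u' has_real_derivative u'' x) (at x)"
proof -
  have "at x within {0..R} = at x"
    using assms by (intro at_within_Icc_at) auto
  then show "(\<Theta> has_real_derivative \<Theta>' x) (at x)" "(u has_real_derivative u' x) (at x)"
    "(u' has_real_derivative u'' x) (at x)"
    using \<Theta>_deriv[of x] u_deriv[of x] u'_deriv[of x] assms by auto
qed

lemma flux_has_derivative:
  assumes "x \<in> {0<..<R}"
  shows "((\<lambda>x. \<Theta> x * u' x) has_real_derivative - lam * (\<Theta> x * u x)) (at x)"
  using ode[of x] assms
  by (auto intro!: derivative_eq_intros derivatives_at_interior simp: algebra_simps)

lemma flux_identity:
  assumes r: "r \<in> {0..<R}"
  shows "\<Theta> r * u' r = lam * integral {r..R} (\<lambda>x. \<Theta> x * u x)"
proof -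
  have sub: "{r..R} \<subseteq> {0..R}" using r by auto
  have "((\<lambda>x. - lam * (\<Theta> x * u x)) has_integral \<Theta> R * u' R - \<Theta> r * u' r) {r..R}"
    using r flux_has_derivative
    by (intro fundamental_theorem_of_calculus_interior continuous_on_subset[OF _ sub]
        continuous_intros \<Theta>_cont u'_cont)
      (auto simp: has_real_derivative_iff_has_vector_derivative[symmetric])
  moreover have "((\<lambda>x. - lam * (\<Theta> x * u x)) has_integral
      - lam * integral {r..R} (\<lambda>x. \<Theta> x * u x)) {r..R}"
    by (intro has_integral_mult_right integrable_integral integrable_continuous_interval
        continuous_on_subset[OF _ sub] continuous_intros \<Theta>_cont u_cont)
  ultimately show ?thesis using neumann by (auto dest: has_integral_unique)
qed

lemma weighted_mass_pos:
  assumes r: "r \<in> {0..<R}"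
  shows "0 < integral {r..R} (\<lambda>x. \<Theta> x * u x)"
proof -
  have "{r..R} \<subseteq> {0..R}" using r by auto
  then show ?thesis
    using r
    by (intro integral_interval_pos continuous_on_subset[OF _ \<open>{r..R} \<subseteq> {0..R}\<close>]
        continuous_intros \<Theta>_cont u_cont mult_nonneg_nonneg mult_pos_pos \<Theta>_nonneg
        less_imp_le u_pos \<Theta>_pos) auto
qed

lemma sgn_u'_eq_sgn_\<sigma>:
  assumes r: "r \<in> {0..<R}"
  shows "sgn (u' r) = sgn \<sigma>"
proof -
  have sgn_u'_eq: "sgn (u' x) = sgn lam" if "x \<in> {0..<R}" for x
    using arg_cong[OF flux_identity[OF that], of sgn] \<Theta>_pos[OF that] weighted_mass_pos[OF that]
    by (simp add: sgn_mult)
  have "sgn (u' 0) = sgn \<sigma>"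
    using robin u_pos[of 0] R_pos by (simp add: sgn_mult)
  with sgn_u'_eq[OF r] sgn_u'_eq[of 0] R_pos show ?thesis by simp
qed

lemma energy_identity:
  "integral {0..R} (\<lambda>r. (u' r)\<^sup>2 * \<Theta> r) + \<sigma> * \<Theta> 0 * (u 0)\<^sup>2
     = lam * integral {0..R} (\<lambda>r. (u r)\<^sup>2 * \<Theta> r)"
proof -
  have "((\<lambda>x. u x * (\<Theta> x * u' x)) has_real_derivative
      (u' x)\<^sup>2 * \<Theta> x - lam * ((u x)\<^sup>2 * \<Theta> x)) (at x)" if "x \<in> {0<..<R}" for x
    using DERIV_mult[OF derivatives_at_interior(2) flux_has_derivative, OF that that]
    by (simp add: power2_eq_square algebra_simps)
  then have "((\<lambda>x. (u' x)\<^sup>2 * \<Theta> x - lam * ((u x)\<^sup>2 * \<Theta> x)) has_integral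
      u R * (\<Theta> R * u' R) - u 0 * (\<Theta> 0 * u' 0)) {0..R}"
    using R_pos
    by (intro fundamental_theorem_of_calculus_interior continuous_intros u_cont \<Theta>_cont u'_cont)
      (auto simp: has_real_derivative_iff_has_vector_derivative[symmetric])
  moreover have "((\<lambda>x. (u' x)\<^sup>2 * \<Theta> x - lam * ((u x)\<^sup>2 * \<Theta> x)) has_integral
      integral {0..R} (\<lambda>r. (u' r)\<^sup>2 * \<Theta> r) - lam * integral {0..R} (\<lambda>r. (u r)\<^sup>2 * \<Theta> r)) {0..R}"
    by (intro has_integral_diff has_integral_mult_right integrable_integral
        integrable_continuous_interval continuous_intros u_cont \<Theta>_cont u'_cont)
  ultimately show ?thesis
    using robin neumann by (auto dest: has_integral_unique simp: power2_eq_square algebra_simps)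
qed

lemma weighted_square_mass_pos:
  assumes b: "b \<in> {0<..R}"
  shows "0 < integral {0..b} (\<lambda>r. (u r)\<^sup>2 * \<Theta> r)"
proof -
  have sub: "{0..b} \<subseteq> {0..R}" using b by auto
  then show ?thesis
    using b u_pos[of 0]
    by (intro integral_interval_pos continuous_on_subset[OF _ sub] continuous_intros u_cont \<Theta>_cont
        mult_nonneg_nonneg mult_pos_pos \<Theta>_nonneg \<Theta>_pos zero_le_power2) auto
qed

lemma admissible_restriction:
  assumes b: "b \<in> {0<..R}"
  shows "(u, u') \<in> admissible_pairs b \<Theta>"
proof -
  have sub: "{0..b} \<subseteq> {0..R}" using b by auto
  then show ?thesis
    unfolding admissible_pairs_def
    using weighted_square_mass_pos[OF b] sub
    by (auto intro!: DERIV_subset[OF u_deriv sub] continuous_on_subset[OF u'_cont sub])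
qed

text \<open>The boundary term of the Rayleigh quotient is \<open>\<sigma> u(0)\<^sup>2\<close>, whereas integrating by parts
  produces \<open>\<sigma> \<Theta>(0) u(0)\<^sup>2\<close>; minimality of \<open>\<lambda>\<close> among test functions reconciles the two.\<close>

lemma robin_weight_le:
  assumes "lam = first_eigenvalue R \<Theta> \<sigma>"
  shows "\<sigma> * \<Theta> 0 \<le> \<sigma>"
proof -
  define D where "D = integral {0..R} (\<lambda>r. (u r)\<^sup>2 * \<Theta> r)"
  have adm: "(u, u') \<in> admissible_pairs R \<Theta>" using R_pos by (intro admissible_restriction) auto
  have D: "0 < D" unfolding D_def using R_pos by (intro weighted_square_mass_pos) auto
  have "lam \<le> rayleigh_quotient R \<Theta> \<sigma> (u, u')"
    unfolding assms first_eigenvalue_eq_INF_rayleigh_quotient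
    using R_pos \<Theta>_cont \<Theta>_pos \<Theta>_nonneg
    by (intro cINF_lower adm rayleigh_quotient_bdd_below) auto
  then have "lam * D \<le> integral {0..R} (\<lambda>r. (u' r)\<^sup>2 * \<Theta> r) + \<sigma> * (u 0)\<^sup>2"
    using D by (simp add: rayleigh_quotient_def D_def field_simps)
  then have "\<sigma> * \<Theta> 0 * (u 0)\<^sup>2 \<le> \<sigma> * (u 0)\<^sup>2"
    using energy_identity by (simp add: D_def)
  moreover have "0 < (u 0)\<^sup>2" using u_pos[of 0] R_pos by simp
  ultimately show ?thesis by (simp add: mult_le_cancel_right_pos)
qed

lemma picone_rayleigh_lower_bound:
  assumes b: "0 < b" "b < R" and weight: "\<sigma> * \<Theta> 0 \<le> \<sigma>"
    and \<epsilon>: "0 < \<epsilon>" "\<epsilon> \<le> A / (2 * b\<^sup>2)" "\<epsilon> * b \<le> u' b * \<Theta> b * u b"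
    and A: "0 < A" "\<And>x. x \<in> {0..b} \<Longrightarrow> A \<le> (u x)\<^sup>2 * \<Theta> x"
    and B: "\<And>x. x \<in> {0..b} \<Longrightarrow> (u x)\<^sup>2 * \<Theta> x \<le> B"
    and p: "(f, v) \<in> admissible_pairs b \<Theta>"
  shows "lam + \<epsilon> / (2 * B) \<le> rayleigh_quotient b \<Theta> \<sigma> (f, v)"
proof -
  have sub: "{0..b} \<subseteq> {0..R}" using b by auto
  note f_deriv = admissible_pairsD(1)[OF p] and f_cont = admissible_pairsD(2)[OF p]
    and v_cont = admissible_pairsD(3)[OF p]
  have \<Theta>_cont_b: "continuous_on {0..b} \<Theta>" using continuous_on_subset[OF \<Theta>_cont sub] .
  have pos: "0 < u x" "0 < \<Theta> x" if "x \<in> {0..b}" for x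
    using that b by (auto intro!: u_pos \<Theta>_pos)
  \<comment> \<open>Picone's function, perturbed so that the remainder dominates \<open>\<epsilon>/(2B) \<Theta> f\<^sup>2\<close>\<close>
  define H where "H y = u' y * \<Theta> y * (f y)\<^sup>2 / u y - \<epsilon> * y * (f y)\<^sup>2 / (u y)\<^sup>2" for y
  define q where "q x = v x - u' x / u x * f x" for x
  define remainder where
    "remainder x = \<Theta> x * (q x)\<^sup>2 + 2 * \<epsilon> * x * f x * q x / (u x)\<^sup>2 + \<epsilon> * (f x)\<^sup>2 / (u x)\<^sup>2" for x
  have H_deriv: "(H has_real_derivative
      (v x)\<^sup>2 * \<Theta> x - lam * ((f x)\<^sup>2 * \<Theta> x) - remainder x) (at x within {0..b})"
    if x: "x \<in> {0..b}" for x
    unfolding H_def[abs_def] remainder_def q_def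
    using x sub b pos[OF x]
    by (intro picone_has_derivative[where u''=u'' and \<Theta>'=\<Theta>'] DERIV_subset[OF u_deriv sub]
        DERIV_subset[OF u'_deriv sub] DERIV_subset[OF \<Theta>_deriv sub] f_deriv ode) auto
  have remainder_ge: "\<epsilon> / (2 * B) * ((f x)\<^sup>2 * \<Theta> x) \<le> remainder x" if x: "x \<in> {0..b}" for x
    using picone_remainder_lower_bound[of "\<Theta> x" "u x" \<epsilon> b x A B "f x" "q x"]
      pos[OF x] x \<epsilon> b A B[OF x]
    by (simp add: remainder_def mult_ac)
  define N where "N = integral {0..b} (\<lambda>x. (v x)\<^sup>2 * \<Theta> x)"
  define D where "D = integral {0..b} (\<lambda>x. (f x)\<^sup>2 * \<Theta> x)"
  have "(H b - H 0) \<le> N - (lam + \<epsilon> / (2 * B)) * D"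
  proof (rule has_integral_le)
    show "((\<lambda>x. (v x)\<^sup>2 * \<Theta> x - lam * ((f x)\<^sup>2 * \<Theta> x) - remainder x) has_integral H b - H 0) {0..b}"
      using fundamental_theorem_of_calculus[of 0 b H] H_deriv b
      by (auto simp: has_real_derivative_iff_has_vector_derivative)
    show "((\<lambda>x. (v x)\<^sup>2 * \<Theta> x - (lam + \<epsilon> / (2 * B)) * ((f x)\<^sup>2 * \<Theta> x))
        has_integral N - (lam + \<epsilon> / (2 * B)) * D) {0..b}"
      unfolding N_def D_def
      by (intro has_integral_diff has_integral_mult_right integrable_integral
          integrable_continuous_interval continuous_intros v_cont f_cont \<Theta>_cont_b)
  qed (use remainder_ge in \<open>auto simp: algebra_simps\<close>)
  moreover have "0 \<le> H b"
    using \<epsilon>(3) pos[of b] b mult_right_mono[OF \<epsilon>(3), of "(f b)\<^sup>2 / (u b)\<^sup>2"]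
    by (simp add: H_def field_simps power2_eq_square)
  moreover have "H 0 \<le> \<sigma> * (f 0)\<^sup>2"
    using robin pos[of 0] b mult_right_mono[OF weight, of "(f 0)\<^sup>2"] by (simp add: H_def)
  moreover have "0 < D"
    unfolding D_def using p \<Theta>_cont_b pos(2)
    by (intro admissible_pairs_integral_pos) (auto intro: less_imp_le)
  ultimately show ?thesis
    by (simp add: rayleigh_quotient_def N_def D_def field_simps)
qed

lemma first_eigenvalue_strict_antimono:
  assumes first: "lam = first_eigenvalue R \<Theta> \<sigma>" and \<sigma>: "0 < \<sigma>" and b: "0 < b" "b < R"
  shows "first_eigenvalue R \<Theta> \<sigma> < first_eigenvalue b \<Theta> \<sigma>"
proof -
  have sub: "{0..b} \<subseteq> {0..R}" using b by auto
  have cont: "continuous_on {0..b} (\<lambda>x. (u x)\<^sup>2 * \<Theta> x)"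
    by (intro continuous_on_subset[OF _ sub] continuous_intros u_cont \<Theta>_cont)
  have ne: "{0..b} \<noteq> {}" using b by simp
  obtain x1 where x1: "x1 \<in> {0..b}"
    and A: "\<And>x. x \<in> {0..b} \<Longrightarrow> (u x1)\<^sup>2 * \<Theta> x1 \<le> (u x)\<^sup>2 * \<Theta> x"
    using continuous_attains_inf[OF compact_Icc ne cont] by auto
  obtain x2 where x2: "x2 \<in> {0..b}"
    and B: "\<And>x. x \<in> {0..b} \<Longrightarrow> (u x)\<^sup>2 * \<Theta> x \<le> (u x2)\<^sup>2 * \<Theta> x2"
    using continuous_attains_sup[OF compact_Icc ne cont] by auto
  have pos: "0 < u x" "0 < \<Theta> x" if "x \<in> {0..b}" for x
    using that b by (auto intro!: u_pos \<Theta>_pos)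
  have A_pos: "0 < (u x1)\<^sup>2 * \<Theta> x1" using pos[OF x1] by simp
  have u'_b: "0 < u' b" using sgn_u'_eq_sgn_\<sigma>[of b] b \<sigma> by (simp add: sgn_1_pos)
  define \<epsilon> where "\<epsilon> = min ((u x1)\<^sup>2 * \<Theta> x1 / (2 * b\<^sup>2)) (u' b * \<Theta> b * u b / b)"
  have "0 < \<epsilon>" using A_pos u'_b pos[of b] b by (simp add: \<epsilon>_def)
  moreover have "\<epsilon> \<le> u' b * \<Theta> b * u b / b" by (simp add: \<epsilon>_def)
  ultimately have \<epsilon>: "0 < \<epsilon>" "\<epsilon> * b \<le> u' b * \<Theta> b * u b"
    using b by (simp_all add: pos_le_divide_eq)
  have "lam + \<epsilon> / (2 * ((u x2)\<^sup>2 * \<Theta> x2)) \<le> first_eigenvalue b \<Theta> \<sigma>"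
    unfolding first_eigenvalue_eq_INF_rayleigh_quotient
  proof (rule cINF_greatest)
    show "admissible_pairs b \<Theta> \<noteq> {}" using admissible_restriction[of b] b by auto
    show "lam + \<epsilon> / (2 * ((u x2)\<^sup>2 * \<Theta> x2)) \<le> rayleigh_quotient b \<Theta> \<sigma> p"
      if "p \<in> admissible_pairs b \<Theta>" for p
    proof (cases p)
      case (Pair f v)
      show ?thesis
        unfolding Pair
        by (rule picone_rayleigh_lower_bound[OF b robin_weight_le[OF first] \<epsilon>(1) _ \<epsilon>(2) A_pos A B])
          (use that Pair in \<open>simp_all add: \<epsilon>_def\<close>)
    qed
  qed
  moreover have "0 < \<epsilon> / (2 * ((u x2)\<^sup>2 * \<Theta> x2))" using \<epsilon> pos[OF x2] by simp
  ultimately show ?thesis using first by simp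
qed

definition riccati_rhs :: "real \<Rightarrow> real" where
  "riccati_rhs x = - (\<Theta>' x / \<Theta> x) * (u' x / u x) - lam - (u' x / u x)\<^sup>2"

lemma log_derivative_has_derivative:
  assumes x: "x \<in> {0<..<R}"
  shows "((\<lambda>x. u' x / u x) has_real_derivative riccati_rhs x) (at x)"
proof -
  have u_x: "0 < u x" and \<Theta>_x: "0 < \<Theta> x" using x by (auto intro!: u_pos \<Theta>_pos)
  have u''_x: "u'' x = (- lam * (\<Theta> x * u x) - u' x * \<Theta>' x) / \<Theta> x"
    using ode[of x] x \<Theta>_x by (simp add: field_simps)
  show ?thesis
    using u_x \<Theta>_x
    by (auto intro!: derivative_eq_intros derivatives_at_interior[OF x]
        simp: riccati_rhs_def u''_x field_simps power2_eq_square)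
qed

end

locale log_concave_robin_neumann_eigenfunction = robin_neumann_eigenfunction +
  fixes \<kappa> :: "real \<Rightarrow> real"
  assumes log_weight_deriv: "\<And>x. x \<in> {0<..<R} \<Longrightarrow> ((\<lambda>x. \<Theta>' x / \<Theta> x) has_real_derivative \<kappa> x) (at x)"
    and log_concave: "\<And>x. x \<in> {0<..<R} \<Longrightarrow> \<kappa> x < 0"
begin

lemma riccati_rhs_has_derivative:
  assumes x: "x \<in> {0<..<R}"
  shows "(riccati_rhs has_real_derivative
      - (\<kappa> x * (u' x / u x) + \<Theta>' x / \<Theta> x * riccati_rhs x) - 2 * (u' x / u x) * riccati_rhs x) (at x)"
proof -
  define a where "a x = \<Theta>' x / \<Theta> x" for x
  define s where "s x = u' x / u x" for x
  have "((\<lambda>x. - a x * s x - lam - (s x)\<^sup>2) has_real_derivative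
      - (\<kappa> x * s x + a x * riccati_rhs x) - 2 * s x * riccati_rhs x) (at x)"
    using log_weight_deriv[OF x] log_derivative_has_derivative[OF x]
    unfolding a_def[abs_def, symmetric] s_def[abs_def, symmetric]
    by (auto intro!: derivative_eq_intros simp: power2_eq_square algebra_simps)
  then show ?thesis by (simp add: riccati_rhs_def[abs_def] a_def s_def)
qed

lemma log_derivative_interior_max_nonpos:
  assumes r: "r \<in> {0<..<R}" and max: "\<And>y. y \<in> {0<..<R} \<Longrightarrow> u' y / u y \<le> u' r / u r"
  shows "u' r / u r \<le> 0"
proof -
  have "riccati_rhs r = 0 \<and>
      - (\<kappa> r * (u' r / u r) + \<Theta>' r / \<Theta> r * riccati_rhs r) - 2 * (u' r / u r) * riccati_rhs r \<le> 0"
    using r by (intro interior_max_second_derivative_test[OF _ _ log_derivative_has_derivative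
          riccati_rhs_has_derivative max]) auto
  then have "0 \<le> \<kappa> r * (u' r / u r)" by auto
  then show ?thesis using log_concave[OF r] mult_neg_pos[of "\<kappa> r" "u' r / u r"] by linarith
qed

lemma log_derivative_interior_min_nonneg:
  assumes r: "r \<in> {0<..<R}" and min: "\<And>y. y \<in> {0<..<R} \<Longrightarrow> u' r / u r \<le> u' y / u y"
  shows "0 \<le> u' r / u r"
proof -
  have "- riccati_rhs r = 0 \<and>
      - (- (\<kappa> r * (u' r / u r) + \<Theta>' r / \<Theta> r * riccati_rhs r) - 2 * (u' r / u r) * riccati_rhs r) \<le> 0"
    using r min
    by (intro interior_max_second_derivative_test[of 0 r R "\<lambda>y. - (u' y / u y)"]
        DERIV_minus log_derivative_has_derivative riccati_rhs_has_derivative) auto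
  then have "\<kappa> r * (u' r / u r) \<le> 0" by auto
  then show ?thesis using log_concave[OF r] mult_neg_neg[of "\<kappa> r" "u' r / u r"] by linarith
qed

lemma log_derivative_bounds:
  assumes r: "r \<in> {0..R}"
  shows "min \<sigma> 0 \<le> u' r / u r \<and> u' r / u r \<le> max \<sigma> 0"
proof -
  have s_cont: "continuous_on {0..R} (\<lambda>x. u' x / u x)"
    using u_pos by (intro continuous_intros u_cont u'_cont) (auto simp: less_imp_neq[symmetric])
  have s_0: "u' 0 / u 0 = \<sigma>" using robin u_pos[of 0] R_pos by simp
  have s_R: "u' R / u R = 0" using neumann by simp
  have ne: "{0..R} \<noteq> {}" using R_pos by simp
  obtain rmax where rmax: "rmax \<in> {0..R}" "\<And>y. y \<in> {0..R} \<Longrightarrow> u' y / u y \<le> u' rmax / u rmax"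
    using continuous_attains_sup[OF compact_Icc ne s_cont] by auto
  obtain rmin where rmin: "rmin \<in> {0..R}" "\<And>y. y \<in> {0..R} \<Longrightarrow> u' rmin / u rmin \<le> u' y / u y"
    using continuous_attains_inf[OF compact_Icc ne s_cont] by auto
  have "u' rmax / u rmax \<le> max \<sigma> 0"
  proof (cases "rmax \<in> {0<..<R}")
    case True
    then show ?thesis using log_derivative_interior_max_nonpos[OF True] rmax by force
  next
    case False
    then have "rmax = 0 \<or> rmax = R" using rmax(1) by auto
    then show ?thesis using s_0 s_R by auto
  qed
  moreover have "min \<sigma> 0 \<le> u' rmin / u rmin"
  proof (cases "rmin \<in> {0<..<R}")
    case True
    then show ?thesis using log_derivative_interior_min_nonneg[OF True] rmin by force
  next
    case False
    then have "rmin = 0 \<or> rmin = R" using rmin(1) by auto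
    then show ?thesis using s_0 s_R by auto
  qed
  ultimately show ?thesis using rmax(2)[OF r] rmin(2)[OF r] by linarith
qed

end

lemma robin_neumann_eigenfunction_deriv_weight:
  assumes R_pos: "0 < R" and S_sub: "{0..R} \<subseteq> S"
    and \<Theta>_deriv: "\<And>x. x \<in> S \<Longrightarrow> (\<Theta> has_real_derivative deriv \<Theta> x) (at x)"
    and \<Theta>_pos: "\<forall>r\<in>{0..<R}. \<Theta> r > 0"
    and u_d1: "\<forall>r\<in>{0..R}. (u has_real_derivative u' r) (at r within {0..R})"
    and u_d2: "\<forall>r\<in>{0..R}. (u' has_real_derivative u'' r) (at r within {0..R})"
    and u_pos: "\<forall>r\<in>{0..R}. u r > 0"
    and eq: "\<forall>r\<in>{0..<R}. u'' r + deriv \<Theta> r / \<Theta> r * u' r + lam * u r = 0"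
    and bc0: "u' 0 = \<sigma> * u 0" and bcR: "u' R = 0"
  shows "robin_neumann_eigenfunction R lam \<sigma> \<Theta> (deriv \<Theta>) u u' u''"
proof
  show "(\<Theta> has_real_derivative deriv \<Theta> x) (at x within {0..R})" if "x \<in> {0..R}" for x
    using S_sub that by (auto intro: has_field_derivative_at_within[OF \<Theta>_deriv])
  show "u'' x * \<Theta> x + u' x * deriv \<Theta> x = - lam * (\<Theta> x * u x)" if "x \<in> {0..<R}" for x
  proof -
    have "0 < \<Theta> x" "u'' x + deriv \<Theta> x / \<Theta> x * u' x + lam * u x = 0"
      using eq \<Theta>_pos that by auto
    then show ?thesis by (simp add: field_simps)
  qed
qed (use R_pos \<Theta>_pos u_d1 u_d2 u_pos bc0 bcR in blast)+

lemma log_concave_robin_neumann_eigenfunction_deriv_weight: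
  assumes eigenfunction: "robin_neumann_eigenfunction R lam \<sigma> \<Theta> (deriv \<Theta>) u u' u''"
    and S: "{0..R} \<subseteq> S"
    and \<Theta>_deriv: "\<And>x. x \<in> S \<Longrightarrow> (\<Theta> has_real_derivative deriv \<Theta> x) (at x)"
    and \<Theta>'_deriv: "\<And>x. x \<in> S \<Longrightarrow> (deriv \<Theta> has_real_derivative deriv (deriv \<Theta>) x) (at x)"
    and log_concave: "\<forall>r\<in>{0..<R}. deriv (deriv (\<lambda>s. ln (\<Theta> s))) r < 0"
  shows "log_concave_robin_neumann_eigenfunction R lam \<sigma> \<Theta> (deriv \<Theta>) u u' u''
           (deriv (deriv (\<lambda>s. ln (\<Theta> s))))"
proof (intro log_concave_robin_neumann_eigenfunction.intro eigenfunction
    log_concave_robin_neumann_eigenfunction_axioms.intro)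
  show "((\<lambda>x. deriv \<Theta> x / \<Theta> x) has_real_derivative deriv (deriv (\<lambda>s. ln (\<Theta> s))) x) (at x)"
    if "x \<in> {0<..<R}" for x
    using that S robin_neumann_eigenfunction.\<Theta>_pos[OF eigenfunction]
    by (intro log_derivative_has_derivative_deriv_deriv_ln[where T="{0<..<R}"
          and f''="deriv (deriv \<Theta>) x"])
      (auto intro!: \<Theta>_deriv \<Theta>'_deriv)
qed (use log_concave in auto)

theorem lemma3p1:
  fixes R \<sigma> lam :: real and \<Theta> u u' u'' :: "real \<Rightarrow> real" and S :: "real set"
  assumes R_pos: "R > 0"
    and S_open: "open S" and S_sub: "{0..R} \<subseteq> S"
    and \<Theta>_smooth: "\<forall>n. (deriv ^^ n) \<Theta> differentiable_on S"
    and \<Theta>_pos: "\<forall>r\<in>{0..<R}. \<Theta> r > 0"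
    and \<sigma>_nz: "\<sigma> \<noteq> 0"
    and u_d1: "\<forall>r\<in>{0..R}. (u has_real_derivative u' r) (at r within {0..R})"
    and u_d2: "\<forall>r\<in>{0..R}. (u' has_real_derivative u'' r) (at r within {0..R})"
    and u''_cont: "continuous_on {0..R} u''"
    and u_pos: "\<forall>r\<in>{0..R}. u r > 0"
    and eq: "\<forall>r\<in>{0..<R}. u'' r + deriv \<Theta> r / \<Theta> r * u' r + lam * u r = 0"
    and bc0: "u' 0 = \<sigma> * u 0"
    and bcR: "u' R = 0"
    and first: "lam = first_eigenvalue R \<Theta> \<sigma>"
  shows "(\<sigma> > 0 \<longrightarrow> (\<forall>r\<in>{0..<R}. u' r > 0))
       \<and> (\<sigma> < 0 \<longrightarrow> (\<forall>r\<in>{0..<R}. u' r < 0))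
       \<and> (\<forall>Rb. \<sigma> > 0 \<and> 0 < Rb \<and> Rb < R \<longrightarrow>
              first_eigenvalue R \<Theta> \<sigma> < first_eigenvalue Rb \<Theta> \<sigma>)
       \<and> ((\<forall>r\<in>{0..<R}. deriv (deriv (\<lambda>s. ln (\<Theta> s))) r < 0) \<longrightarrow>
            (\<sigma> > 0 \<longrightarrow> (\<forall>r\<in>{0..R}. 0 \<le> u' r / u r \<and> u' r / u r \<le> \<sigma>))
          \<and> (\<sigma> < 0 \<longrightarrow> (\<forall>r\<in>{0..R}. \<sigma> \<le> u' r / u r \<and> u' r / u r \<le> 0)))"
proof -
  have \<Theta>_deriv: "(\<Theta> has_real_derivative deriv \<Theta> x) (at x)"
    and \<Theta>'_deriv: "(deriv \<Theta> has_real_derivative deriv (deriv \<Theta>) x) (at x)" if "x \<in> S" for x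
    using smooth_has_real_derivative[OF S_open \<Theta>_smooth[rule_format] that, of 0]
      smooth_has_real_derivative[OF S_open \<Theta>_smooth[rule_format] that, of 1] by simp_all
  have eigenfunction: "robin_neumann_eigenfunction R lam \<sigma> \<Theta> (deriv \<Theta>) u u' u''"
    using assms \<Theta>_deriv by (intro robin_neumann_eigenfunction_deriv_weight) auto
  have bounds: "min \<sigma> 0 \<le> u' r / u r \<and> u' r / u r \<le> max \<sigma> 0"
    if "\<forall>r\<in>{0..<R}. deriv (deriv (\<lambda>s. ln (\<Theta> s))) r < 0" "r \<in> {0..R}" for r
    using log_concave_robin_neumann_eigenfunction.log_derivative_bounds
      log_concave_robin_neumann_eigenfunction_deriv_weight[OF eigenfunction S_sub \<Theta>_deriv \<Theta>'_deriv]
      that by blast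
  note sign = robin_neumann_eigenfunction.sgn_u'_eq_sgn_\<sigma>[OF eigenfunction]
  show ?thesis
  proof (intro conjI impI allI ballI)
    show "0 < u' r" if "0 < \<sigma>" "r \<in> {0..<R}" for r
      using sign[OF that(2)] that(1) by (simp add: sgn_1_pos)
    show "u' r < 0" if "\<sigma> < 0" "r \<in> {0..<R}" for r
      using sign[OF that(2)] that(1) by (simp add: sgn_1_neg)
    show "first_eigenvalue R \<Theta> \<sigma> < first_eigenvalue Rb \<Theta> \<sigma>" if "0 < \<sigma> \<and> 0 < Rb \<and> Rb < R" for Rb
      using that robin_neumann_eigenfunction.first_eigenvalue_strict_antimono[OF eigenfunction first]
      by blast
  qed (use bounds in \<open>simp_all add: min_def max_def\<close>)
qed

end
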